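(* Let $\mathcal X$ be a finite alphabet, $\widehat q$ a probability vector on $\mathcal X$, and $p$ a probability measure on the nonnegative integers with mean one. Define $q(c)=p(n)\prod_{i=1}^n\widehat q(a_i)$ for $c=(n,a_1,\dots,a_n)\in\mathcal X^*$. Then for every $\phi:\mathcal X\to[0,\infty)$, with $z=\sum_{b\in\mathcal X}\phi(b)$, $$\inf\Big\{H(\widetilde\nu\,\|\,q):\widetilde\nu\in\mathcal M(\mathcal X^* ),\ \phi(b)=\sum_{c\in\mathcal X^*}m(b,c)\widetilde\nu(c)\text{ for all }b\in\mathcal X\Big\}=z\,H(\phi/z\,\|\,\widehat q)+I_p(z),$$ where $I_p(x)=\sup_{\lambda\in\mathbb R}\{\lambda x-\log\sum_{n=0}^\infty p(n)e^{\lambda n}\}$ (and the term $zH(\phi/z\,\|\,\widehat q)$ is interpreted as $0$ when $z=0$).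
   Context: $\mathcal X^*=\bigcup_{n\ge0}\{n\}\times\mathcal X^n$ with elements $c=(n,a_1,\dots,a_n)$; $m(b,c)=\sum_{i=1}^n\mathbf 1\{a_i=b\}$. $\mathcal M(\mathcal X^* )$ is the set of probability measures on $\mathcal X^*$; $H$ is relative entropy. *)

theory Defs
  imports "HOL-Analysis.Analysis"
begin

text \<open>Words c = (n, a_1, ..., a_n) in X^* are represented as lists (n = length c).\<close>

definition mult :: "'a \<Rightarrow> 'a list \<Rightarrow> nat" where
  "mult b c = count_list c b"

text \<open>Relative entropy H(nu || mu) of (countably supported) probability vectors, with values in
  [0, infinity]: 0 log 0 = 0, and it is infinite if nu is not absolutely continuous w.r.t. mu or
  the series does not converge (absolutely).\<close>
definition relent :: "('b \<Rightarrow> real) \<Rightarrow> ('b \<Rightarrow> real) \<Rightarrow> ereal" where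
  "relent \<nu> \<mu> =
     (if (\<forall>x. \<nu> x > 0 \<longrightarrow> \<mu> x > 0) \<and> (\<lambda>x. \<nu> x * ln (\<nu> x / \<mu> x)) summable_on UNIV
      then ereal (\<Sum>\<^sub>\<infinity>x. \<nu> x * ln (\<nu> x / \<mu> x)) else \<infinity>)"

definition is_prob :: "('b \<Rightarrow> real) \<Rightarrow> bool" where
  "is_prob \<nu> \<longleftrightarrow> (\<forall>x. \<nu> x \<ge> 0) \<and> (\<nu> has_sum 1) UNIV"

definition qword :: "(nat \<Rightarrow> real) \<Rightarrow> ('a \<Rightarrow> real) \<Rightarrow> 'a list \<Rightarrow> real" where
  "qword p qh c = p (length c) * prod_list (map qh c)"

definition Ip :: "(nat \<Rightarrow> real) \<Rightarrow> real \<Rightarrow> ereal" where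
  "Ip p x = (SUP t::real. (if summable (\<lambda>n. p n * exp (t * real n))
                           then ereal (t * x - ln (\<Sum>n. p n * exp (t * real n)))
                           else -\<infinity>))"

end

theory Submission
  imports Defs
begin

text \<open>
  Lower bound: for feasible nu and every t, Gibbs' inequality against the word weights
  p(n) e^(tn) prod_i phi(a_i)/z, whose total mass is at most sum_n p(n) e^(tn), gives
  H(nu || q) >= t z - log sum_n p(n) e^(tn) + z H(phi/z || qhat), because under nu the expected
  length is z and the expected letter counts are phi.
  Upper bound: if r has mean z, the word law r(n) prod_i phi(a_i)/z is feasible and, by the chain
  rule, has relative entropy H(r || p) + z H(phi/z || qhat); and I_p(z) is approached by H(r || p)
  over finitely supported r of mean z -- exponential tilts of truncations of p when z lies
  strictly between two atoms of p, a point mass at an extreme atom otherwise.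
\<close>

section \<open>Sums over words\<close>

lemma sum_lists_length_Suc:
  fixes f :: "'a::finite list \<Rightarrow> 'b::comm_monoid_add"
  shows "(\<Sum>c | length c = Suc n. f c) = (\<Sum>x\<in>UNIV. \<Sum>xs | length xs = n. f (x # xs))"
proof -
  have "{c::'a list. length c = Suc n} = (\<lambda>(x, xs). x # xs) ` (UNIV \<times> {xs. length xs = n})"
    by (auto simp: length_Suc_conv image_iff)
  moreover have "inj_on (\<lambda>(x, xs). x # xs) (UNIV \<times> {xs::'a list. length xs = n})"
    by (auto simp: inj_on_def)
  ultimately show ?thesis
    by (simp add: sum.reindex sum.cartesian_product split_def)
qed

lemma sum_lists_length_le:
  fixes f :: "'a::finite list \<Rightarrow> 'b::comm_monoid_add"
  shows "(\<Sum>c | length c \<le> N. f c) = (\<Sum>n\<le>N. \<Sum>c | length c = n. f c)"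
proof -
  have "{c::'a list. length c \<le> N} = (\<Union>n\<in>{..N}. {c. length c = n})" by auto
  moreover have "finite {c::'a list. length c = n}" for n
    using finite_lists_length_eq[of "UNIV::'a set" n] by simp
  ultimately show ?thesis by (auto intro: sum.UNION_disjoint)
qed

lemma sum_prod_list_lists_length:
  fixes w :: "'a::finite \<Rightarrow> 'b::comm_semiring_1"
  shows "(\<Sum>c | length c = n. prod_list (map w c)) = (\<Sum>b\<in>UNIV. w b) ^ n"
  by (induction n) (simp_all add: sum_lists_length_Suc sum_distrib_left[symmetric]
                                  sum_distrib_right[symmetric])

lemma sum_count_list_prod_list_lists_length:
  fixes w :: "'a::finite \<Rightarrow> 'b::comm_semiring_1"
  assumes "(\<Sum>b\<in>UNIV. w b) = 1"
  shows "(\<Sum>c | length c = n. prod_list (map w c) * of_nat (count_list c b)) = of_nat n * w b"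
proof (induction n)
  case (Suc n)
  have "(\<Sum>c | length c = Suc n. prod_list (map w c) * of_nat (count_list c b))
      = (\<Sum>x\<in>UNIV. (if x = b then w x else 0) * (\<Sum>xs | length xs = n. prod_list (map w xs))
           + w x * (\<Sum>xs | length xs = n. prod_list (map w xs) * of_nat (count_list xs b)))"
    unfolding sum_lists_length_Suc sum_distrib_left sum.distrib[symmetric]
    by (intro sum.cong refl) (simp add: algebra_simps)
  also have "\<dots> = w b + (\<Sum>x\<in>UNIV. w x) * (of_nat n * w b)"
    by (simp add: Suc sum_prod_list_lists_length assms sum.distrib sum_distrib_right[symmetric])
  finally show ?case by (simp add: assms algebra_simps)
qed simp

lemma sum_prod_list_lists_length_affine_count:
  fixes w l :: "'a::finite \<Rightarrow> 'b::comm_semiring_1"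
  assumes "(\<Sum>b\<in>UNIV. w b) = 1"
  shows "(\<Sum>c | length c = n. prod_list (map w c) * (a + (\<Sum>b\<in>UNIV. of_nat (count_list c b) * l b)))
           = a + of_nat n * (\<Sum>b\<in>UNIV. w b * l b)"
proof -
  have "(\<Sum>c | length c = n. prod_list (map w c) * (\<Sum>b\<in>UNIV. of_nat (count_list c b) * l b))
      = (\<Sum>b\<in>UNIV. l b * (\<Sum>c | length c = n. prod_list (map w c) * of_nat (count_list c b)))"
    by (simp add: sum_distrib_left sum.swap[of _ UNIV] mult_ac)
  also have "\<dots> = of_nat n * (\<Sum>b\<in>UNIV. w b * l b)"
    by (simp add: sum_count_list_prod_list_lists_length[OF assms] sum_distrib_left mult_ac)
  finally show ?thesis
    by (simp add: distrib_left sum.distrib sum_distrib_right[symmetric]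
                  sum_prod_list_lists_length assms)
qed

lemma sum_list_map_eq_sum_count_list:
  fixes f :: "'a::finite \<Rightarrow> 'b::semiring_1"
  shows "(\<Sum>x\<leftarrow>c. f x) = (\<Sum>b\<in>UNIV. of_nat (count_list c b) * f b)"
proof (induction c)
  case (Cons a c)
  have "(\<Sum>b\<in>UNIV. of_nat (count_list (a # c) b) * f b)
      = (\<Sum>b\<in>UNIV. (if b = a then f b else 0) + of_nat (count_list c b) * f b)"
    by (intro sum.cong refl) (simp add: algebra_simps)
  with Cons show ?case by (simp add: sum.distrib)
qed simp

lemma prod_list_map_pos:
  fixes f :: "'a \<Rightarrow> 'b::linordered_semidom"
  shows "(\<And>x. x \<in> set c \<Longrightarrow> 0 < f x) \<Longrightarrow> 0 < prod_list (map f c)"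
  by (induction c) auto

lemma ln_prod_list_map:
  fixes f :: "'a \<Rightarrow> real"
  shows "(\<And>x. x \<in> set c \<Longrightarrow> 0 < f x) \<Longrightarrow> ln (prod_list (map f c)) = (\<Sum>x\<leftarrow>c. ln (f x))"
proof (induction c)
  case (Cons a c)
  have "0 < f a" by (simp add: Cons.prems)
  moreover have "0 < prod_list (map f c)" by (intro prod_list_map_pos) (simp add: Cons.prems)
  moreover have "ln (prod_list (map f c)) = (\<Sum>x\<leftarrow>c. ln (f x))"
    by (rule Cons.IH) (simp add: Cons.prems)
  ultimately show ?case by (simp add: ln_mult)
qed simp

lemma prod_list_map_divide:
  fixes f g :: "'a \<Rightarrow> 'b::field"
  shows "prod_list (map f c) / prod_list (map g c) = prod_list (map (\<lambda>x. f x / g x) c)"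
proof (induction c)
  case (Cons a c)
  have "f a * prod_list (map f c) / (g a * prod_list (map g c))
      = f a / g a * (prod_list (map f c) / prod_list (map g c))" by simp
  with Cons show ?case by simp
qed simp

lemma qword_nonneg: "(\<And>n. 0 \<le> r n) \<Longrightarrow> (\<And>b. 0 \<le> w b) \<Longrightarrow> 0 \<le> qword r w c"
  unfolding qword_def by (auto intro!: mult_nonneg_nonneg prod_list_nonneg)

lemma qword_pos_iff:
  assumes "\<And>n. 0 \<le> r n" and "\<And>b. 0 \<le> w b"
  shows "0 < qword r w c \<longleftrightarrow> 0 < r (length c) \<and> (\<forall>x\<in>set c. 0 < w x)"
proof
  assume pos: "0 < qword r w c"
  have "0 \<le> prod_list (map w c)" using assms(2) by (auto intro!: prod_list_nonneg)
  with pos assms(1)[of "length c"] have "0 < r (length c)" "0 < prod_list (map w c)"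
    by (auto simp: qword_def zero_less_mult_iff)
  moreover have "0 < w x" if "x \<in> set c" for x
    using that \<open>0 < prod_list (map w c)\<close> assms(2)[of x]
    by (metis image_eqI less_irrefl list.set_map order_le_less prod_list_zero_iff)
  ultimately show "0 < r (length c) \<and> (\<forall>x\<in>set c. 0 < w x)" by blast
qed (simp add: qword_def prod_list_map_pos)

lemma ln_qword_divide:
  fixes w q :: "'a::finite \<Rightarrow> real"
  assumes "\<And>n. 0 \<le> r n" "\<And>b. 0 \<le> w b" "\<And>n. 0 \<le> p n" "\<And>b. 0 \<le> q b"
    and "0 < qword r w c" and "0 < qword p q c"
  shows "ln (qword r w c / qword p q c)
           = ln (r (length c) / p (length c)) + (\<Sum>b\<in>UNIV. real (count_list c b) * ln (w b / q b))"
proof -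
  have r: "0 < r (length c)" and w: "\<forall>x\<in>set c. 0 < w x"
    using assms(5) qword_pos_iff[of r w c] assms(1,2) by auto
  have p: "0 < p (length c)" and q: "\<forall>x\<in>set c. 0 < q x"
    using assms(6) qword_pos_iff[of p q c] assms(3,4) by auto
  have "qword r w c / qword p q c = r (length c) / p (length c) * prod_list (map (\<lambda>x. w x / q x) c)"
    by (simp add: qword_def prod_list_map_divide[symmetric])
  moreover have "0 < prod_list (map (\<lambda>x. w x / q x) c)"
    using w q by (simp add: prod_list_map_pos)
  ultimately have "ln (qword r w c / qword p q c)
      = ln (r (length c) / p (length c)) + ln (prod_list (map (\<lambda>x. w x / q x) c))"
    using r p by (metis ln_mult_pos divide_pos_pos)
  also have "\<dots> = ln (r (length c) / p (length c)) + (\<Sum>x\<leftarrow>c. ln (w x / q x))"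
    using w q by (simp add: ln_prod_list_map)
  finally show ?thesis by (simp add: sum_list_map_eq_sum_count_list)
qed

lemma has_sum_qword_times:
  fixes w :: "'a::finite \<Rightarrow> real"
  assumes "\<And>n. K < n \<Longrightarrow> r n = 0"
  shows "((\<lambda>c. qword r w c * f c) has_sum
           (\<Sum>n\<le>K. r n * (\<Sum>c | length c = n. prod_list (map w c) * f c))) UNIV"
proof (rule has_sum_finite_neutralI)
  show "finite {c::'a list. length c \<le> K}"
    using finite_lists_length_le[of "UNIV::'a set" K] by simp
  show "(\<Sum>n\<le>K. r n * (\<Sum>c | length c = n. prod_list (map w c) * f c))
        = (\<Sum>c | length c \<le> K. qword r w c * f c)"
    by (simp add: sum_lists_length_le sum_distrib_left qword_def mult.assoc)
qed (use assms in \<open>auto simp: qword_def\<close>)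

lemma is_prob_qword:
  fixes w :: "'a::finite \<Rightarrow> real"
  assumes "\<And>n. 0 \<le> r n" "\<And>n. K < n \<Longrightarrow> r n = 0" "(\<Sum>n\<le>K. r n) = 1"
    and "\<And>b. 0 \<le> w b" "(\<Sum>b\<in>UNIV. w b) = 1"
  shows "is_prob (qword r w)"
  using has_sum_qword_times[where K=K and r=r and w=w and f="\<lambda>_. 1"] assms
  by (simp add: is_prob_def qword_nonneg sum_prod_list_lists_length)

lemma has_sum_count_qword:
  fixes w :: "'a::finite \<Rightarrow> real"
  assumes "\<And>n. K < n \<Longrightarrow> r n = 0" and "(\<Sum>b\<in>UNIV. w b) = 1"
  shows "((\<lambda>c. real (mult b c) * qword r w c) has_sum (\<Sum>n\<le>K. real n * r n) * w b) UNIV"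
  using has_sum_qword_times[where K=K and r=r and w=w and f="\<lambda>c. real (count_list c b)"] assms(1)
  by (simp add: mult_def mult.commute sum_count_list_prod_list_lists_length[OF assms(2)]
                sum_distrib_left mult_ac)

text \<open>The chain rule for relative entropy, conditioning on the length.\<close>
lemma relent_qword:
  fixes w q :: "'a::finite \<Rightarrow> real"
  assumes r: "\<And>n. 0 \<le> r n" "\<And>n. K < n \<Longrightarrow> r n = 0" "\<And>n. 0 < r n \<Longrightarrow> 0 < p n"
    and w: "\<And>b. 0 \<le> w b" "(\<Sum>b\<in>UNIV. w b) = 1" "\<And>b. 0 < w b \<Longrightarrow> 0 < q b"
    and p: "\<And>n. 0 \<le> p n" and q: "\<And>b. 0 \<le> q b"
  shows "relent (qword r w) (qword p q)
           = ereal ((\<Sum>n\<le>K. r n * ln (r n / p n))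
                    + (\<Sum>n\<le>K. real n * r n) * (\<Sum>b\<in>UNIV. w b * ln (w b / q b)))"
proof -
  define L where "L c = ln (r (length c) / p (length c))
                        + (\<Sum>b\<in>UNIV. real (count_list c b) * ln (w b / q b))" for c
  have abs_cont: "0 < qword p q c" if "0 < qword r w c" for c
    using that r(1,3) w(1,3) p q by (simp add: qword_pos_iff)
  have pointwise: "qword r w c * ln (qword r w c / qword p q c) = qword r w c * L c" for c
    using qword_nonneg[of r w c, OF r(1) w(1)] abs_cont[of c] ln_qword_divide[OF r(1) w(1) p q]
    by (cases "0 < qword r w c") (simp_all add: L_def)
  have per_length: "(\<Sum>c | length c = n. prod_list (map w c) * L c)
      = ln (r n / p n) + real n * (\<Sum>b\<in>UNIV. w b * ln (w b / q b))" for n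
  proof -
    have "(\<Sum>c | length c = n. prod_list (map w c) * L c)
        = (\<Sum>c | length c = n. prod_list (map w c) *
             (ln (r n / p n) + (\<Sum>b\<in>UNIV. real (count_list c b) * ln (w b / q b))))"
      by (intro sum.cong) (auto simp: L_def)
    then show ?thesis by (simp only: sum_prod_list_lists_length_affine_count[OF w(2)])
  qed
  have "(\<Sum>n\<le>K. r n * (\<Sum>c | length c = n. prod_list (map w c) * L c))
      = (\<Sum>n\<le>K. r n * ln (r n / p n))
        + (\<Sum>n\<le>K. real n * r n) * (\<Sum>b\<in>UNIV. w b * ln (w b / q b))"
    unfolding per_length by (simp add: distrib_left sum.distrib sum_distrib_right mult_ac)
  then have "((\<lambda>c. qword r w c * L c) has_sum
      ((\<Sum>n\<le>K. r n * ln (r n / p n))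
        + (\<Sum>n\<le>K. real n * r n) * (\<Sum>b\<in>UNIV. w b * ln (w b / q b)))) UNIV"
    using has_sum_qword_times[where K = K and r = r and w = w and f = L] r(2) by simp
  then have "((\<lambda>c. qword r w c * ln (qword r w c / qword p q c)) has_sum
      ((\<Sum>n\<le>K. r n * ln (r n / p n))
        + (\<Sum>n\<le>K. real n * r n) * (\<Sum>b\<in>UNIV. w b * ln (w b / q b)))) UNIV"
    by (simp add: pointwise)
  then show ?thesis
    using abs_cont by (auto simp: relent_def has_sum_iff)
qed

lemma sum_qword_le:
  fixes w :: "'a::finite \<Rightarrow> real"
  assumes "finite F" and r: "\<And>n. 0 \<le> r n" "summable r"
    and w: "\<And>b. 0 \<le> w b" "(\<Sum>b\<in>UNIV. w b) \<le> 1"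
  shows "(\<Sum>c\<in>F. qword r w c) \<le> (\<Sum>n. r n)"
proof -
  define N where "N = (\<Sum>c\<in>F. length c)"
  have "F \<subseteq> {c. length c \<le> N}"
    unfolding N_def using assms(1) by (auto intro: member_le_sum)
  then have "(\<Sum>c\<in>F. qword r w c) \<le> (\<Sum>c | length c \<le> N. qword r w c)"
    using finite_lists_length_le[of "UNIV::'a set" N]
    by (intro sum_mono2) (auto intro: qword_nonneg r w)
  also have "\<dots> = (\<Sum>n\<le>N. r n * (\<Sum>b\<in>UNIV. w b) ^ n)"
    by (simp add: sum_lists_length_le qword_def sum_distrib_left[symmetric]
                  sum_prod_list_lists_length)
  also have "\<dots> \<le> (\<Sum>n\<le>N. r n)"
    using w r(1) by (auto intro!: sum_mono mult_right_le_one_le power_le_one zero_le_power sum_nonneg)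
  also have "\<dots> \<le> (\<Sum>n. r n)"
    using r by (intro sum_le_suminf) auto
  finally show ?thesis .
qed

lemma has_sum_qword_le:
  fixes w :: "'a::finite \<Rightarrow> real"
  assumes r: "\<And>n. 0 \<le> r n" "summable r" and w: "\<And>b. 0 \<le> w b" "(\<Sum>b\<in>UNIV. w b) \<le> 1"
  obtains W where "(qword r w has_sum W) UNIV" and "W \<le> (\<Sum>n. r n)"
proof
  have finite_sums: "sum (qword r w) F \<le> (\<Sum>n. r n)" if "finite F" for F
    using sum_qword_le[OF that r w] .
  have summable: "qword r w summable_on UNIV"
    using finite_sums qword_nonneg[OF r(1) w(1)]
    by (intro nonneg_bdd_above_summable_on bdd_aboveI) auto
  then show "(qword r w has_sum infsum (qword r w) UNIV) UNIV" by (rule has_sum_infsum)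
  show "infsum (qword r w) UNIV \<le> (\<Sum>n. r n)"
    using finite_sums by (intro infsum_le_finite_sums[OF summable]) auto
qed

section \<open>Gibbs' inequality\<close>

lemma has_sum_diff:
  fixes f g :: "'b \<Rightarrow> real"
  assumes "(f has_sum a) A" "(g has_sum b) A"
  shows "((\<lambda>x. f x - g x) has_sum (a - b)) A"
  using has_sum_add[OF assms(1) has_sum_uminusI[OF assms(2)]] by simp

lemma has_sum_sum:
  fixes f :: "'i \<Rightarrow> 'b \<Rightarrow> real"
  assumes "finite I" "\<And>i. i \<in> I \<Longrightarrow> (f i has_sum s i) A"
  shows "((\<lambda>x. \<Sum>i\<in>I. f i x) has_sum (\<Sum>i\<in>I. s i)) A"
  using assms by (induction I rule: finite_induct) (simp_all add: has_sum_add)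

text \<open>Both sides are taken relative to a common reference q, so that no summability of their
  difference is needed.\<close>
lemma gibbs_inequality:
  fixes \<nu> q w :: "'b \<Rightarrow> real"
  assumes \<nu>: "\<And>c. 0 \<le> \<nu> c" "(\<nu> has_sum 1) UNIV"
    and pos: "\<And>c. 0 < \<nu> c \<Longrightarrow> 0 < q c" "\<And>c. 0 < \<nu> c \<Longrightarrow> 0 < w c"
    and w: "\<And>c. 0 \<le> w c" "(w has_sum W) UNIV" "W \<le> Z" "0 < Z"
    and H: "((\<lambda>c. \<nu> c * ln (\<nu> c / q c)) has_sum H) UNIV"
    and G: "((\<lambda>c. \<nu> c * ln (w c / q c)) has_sum G) UNIV"
  shows "G - ln Z \<le> H"
proof -
  have pointwise: "\<nu> c * ln (w c / q c) - \<nu> c * ln (\<nu> c / q c) - ln Z * \<nu> c \<le> w c / Z - \<nu> c"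
    for c
  proof (cases "0 < \<nu> c")
    case True
    have "ln (w c / q c) - ln (\<nu> c / q c) - ln Z = ln (w c / (Z * \<nu> c))"
      using True pos[of c] w(4) by (simp add: ln_div ln_mult)
    also have "\<dots> \<le> w c / (Z * \<nu> c) - 1"
      using True pos[of c] w(4) by (intro ln_le_minus_one) simp
    finally have "\<nu> c * (ln (w c / q c) - ln (\<nu> c / q c) - ln Z) \<le> \<nu> c * (w c / (Z * \<nu> c) - 1)"
      using True by (intro mult_left_mono) auto
    also have "\<dots> = w c / Z - \<nu> c" using True w(4) by (simp add: field_simps)
    finally show ?thesis by (simp add: algebra_simps)
  next
    case False
    then show ?thesis using \<nu>(1)[of c] w(1)[of c] w(4) by simp
  qed
  have "((\<lambda>c. \<nu> c * ln (w c / q c) - \<nu> c * ln (\<nu> c / q c) - ln Z * \<nu> c) has_sum (G - H - ln Z))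
          UNIV"
    using has_sum_diff[OF has_sum_diff[OF G H] has_sum_cmult_right[OF \<nu>(2), of "ln Z"]] by simp
  moreover have "((\<lambda>c. w c / Z - \<nu> c) has_sum (W / Z - 1)) UNIV"
    using has_sum_diff[OF has_sum_divide_const[OF w(2), of Z] \<nu>(2)] by simp
  ultimately have "G - H - ln Z \<le> W / Z - 1" using has_sum_mono pointwise by blast
  also have "\<dots> \<le> 0" using w(3,4) by (simp add: field_simps)
  finally show ?thesis by simp
qed

section \<open>The rate function\<close>

abbreviation mgf :: "(nat \<Rightarrow> real) \<Rightarrow> real \<Rightarrow> real" where
  "mgf p t \<equiv> \<Sum>n. p n * exp (t * real n)"

abbreviation mgf_summable :: "(nat \<Rightarrow> real) \<Rightarrow> real \<Rightarrow> bool" where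
  "mgf_summable p t \<equiv> summable (\<lambda>n. p n * exp (t * real n))"

lemma bracket_le_Ip: "mgf_summable p t \<Longrightarrow> ereal (t * x - ln (mgf p t)) \<le> Ip p x"
  unfolding Ip_def by (rule SUP_upper2[where i = t]) auto

lemma Ip_le: "(\<And>t. mgf_summable p t \<Longrightarrow> t * x - ln (mgf p t) \<le> B) \<Longrightarrow> Ip p x \<le> ereal B"
  unfolding Ip_def by (rule SUP_least) auto

lemma sums_one_imp_pos: "p sums (1::real) \<Longrightarrow> \<exists>n. 0 < p n"
proof (rule ccontr)
  assume "p sums 1" "\<nexists>n. 0 < p n"
  then have "1 \<le> (0::real)" using sums_le[of p "\<lambda>_. 0" 1 0] by (simp add: not_less)
  then show False by simp
qed

lemma mgf_pos:
  assumes "\<And>n. 0 \<le> p n" "p sums 1" "mgf_summable p t"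
  shows "0 < mgf p t"
proof -
  obtain i where "0 < p i" using sums_one_imp_pos[OF assms(2)] by blast
  then show ?thesis using assms(1,3) by (intro suminf_pos2[where i = i]) auto
qed

lemma Ip_nonneg: "(\<And>n. 0 \<le> p n) \<Longrightarrow> p sums 1 \<Longrightarrow> 0 \<le> Ip p x"
  using bracket_le_Ip[of p 0 x] by (simp add: sums_summable sums_unique[symmetric] zero_ereal_def)

lemma mgf_le_exp:
  assumes p: "\<And>n. 0 \<le> p n" "p sums P" and bound: "\<And>n. 0 < p n \<Longrightarrow> t * real n \<le> a"
  shows "mgf_summable p t" and "mgf p t \<le> P * exp a"
proof -
  have le: "p n * exp (t * real n) \<le> p n * exp a" for n
    using p(1)[of n] bound[of n] by (cases "p n = 0") (auto intro: mult_left_mono)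
  have "(\<lambda>n. p n * exp a) sums (P * exp a)" using sums_mult2[OF p(2)] .
  moreover show summable: "mgf_summable p t"
    using le p(1) by (intro summable_comparison_test'[OF sums_summable[OF calculation]]) auto
  ultimately show "mgf p t \<le> P * exp a"
    using le by (intro sums_le[OF le summable_sums[OF summable]]) auto
qed

lemma bracket_ge_if_support_bounded:
  assumes "\<And>n. 0 \<le> p n" "p sums 1" and "\<And>n. 0 < p n \<Longrightarrow> t * real n \<le> a"
  shows "ereal (t * x - a) \<le> Ip p x"
proof -
  have summable: "mgf_summable p t" and "mgf p t \<le> exp a" using mgf_le_exp[OF assms] by simp_all
  then have "ln (mgf p t) \<le> ln (exp a)"
    using mgf_pos[OF assms(1,2) summable] by (subst ln_le_cancel_iff) auto
  then have "ln (mgf p t) \<le> a" by simp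
  then have "ereal (t * x - a) \<le> ereal (t * x - ln (mgf p t))" by simp
  also have "\<dots> \<le> Ip p x" by (rule bracket_le_Ip[OF summable])
  finally show ?thesis .
qed

text \<open>A functional s separating x from the support makes the bracket unbounded along t = u s.\<close>
lemma Ip_eq_infinity_if_separated:
  assumes "\<And>n. 0 \<le> p n" "p sums 1"
    and sep: "\<And>n. 0 < p n \<Longrightarrow> s * real n \<le> c" "c < s * x"
  shows "Ip p x = \<infinity>"
proof (rule ereal_top)
  fix B :: real
  define u where "u = \<bar>B\<bar> / (s * x - c)"
  have u: "0 \<le> u" using sep(2) by (simp add: u_def)
  have "ereal ((u * s) * x - u * c) \<le> Ip p x"
    using u sep(1) by (intro bracket_ge_if_support_bounded[OF assms(1,2)])
                      (simp add: mult.assoc mult_left_mono)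
  moreover have "(u * s) * x - u * c = \<bar>B\<bar>"
  proof -
    have "(u * s) * x - u * c = u * (s * x - c)" by (simp add: algebra_simps)
    then show ?thesis using sep(2) by (simp add: u_def)
  qed
  ultimately show "ereal B \<le> Ip p x" by (metis abs_ge_self ereal_less_eq(3) order_trans)
qed

lemma mgf_le_at_exposed_atom:
  assumes p: "\<And>n. 0 \<le> p n" "p sums 1" and pm: "0 < p m" and "0 \<le> u"
    and exposed: "\<And>n. n \<noteq> m \<Longrightarrow> 0 < p n \<Longrightarrow> s * real n + 1 \<le> s * real m"
  shows "mgf_summable p (u * s)" and "mgf p (u * s) \<le> exp (u * s * real m) * (p m + exp (- u))"
proof -
  define t where "t = u * s"
  define rest where "rest = p(m := 0)"
  have "rest = (\<lambda>n. p n - (if n = m then p n else 0))" by (auto simp: rest_def)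
  then have rest_sums: "rest sums (1 - p m)" using sums_diff[OF p(2) sums_single[of m p]] by simp
  have rest_tilt: "t * real n \<le> t * real m - u" if "0 < rest n" for n
    using mult_left_mono[OF exposed[of n] \<open>0 \<le> u\<close>] that
    by (auto simp: rest_def t_def algebra_simps split: if_splits)
  have "0 \<le> rest n" for n by (simp add: rest_def p(1))
  note rest_mgf = mgf_le_exp[of rest, OF this rest_sums rest_tilt]
  have "(\<lambda>n. p n * exp (t * real n))
      = (\<lambda>n. rest n * exp (t * real n) + (if n = m then p n * exp (t * real n) else 0))"
    by (auto simp: rest_def)
  then have "(\<lambda>n. p n * exp (t * real n)) sums (mgf rest t + p m * exp (t * real m))"
    using sums_add[OF summable_sums[OF rest_mgf(1)] sums_single[of m "\<lambda>n. p n * exp (t * real n)"]]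
    by simp
  moreover have "mgf rest t \<le> exp (t * real m) * exp (- u)"
  proof -
    have "(1 - p m) * exp (t * real m - u) \<le> exp (t * real m - u)" using pm by (simp add: algebra_simps)
    from order_trans[OF rest_mgf(2) this] show ?thesis by (simp add: exp_add[symmetric])
  qed
  ultimately show "mgf_summable p (u * s)" and "mgf p (u * s) \<le> exp (u * s * real m) * (p m + exp (- u))"
    by (simp_all add: t_def sums_summable sums_unique[symmetric] algebra_simps)
qed

text \<open>Tilting along the exposing functional s concentrates the mass on the atom m.\<close>
lemma neg_ln_le_Ip_at_exposed_atom:
  assumes p: "\<And>n. 0 \<le> p n" "p sums 1" and pm: "0 < p m"
    and exposed: "\<And>n. n \<noteq> m \<Longrightarrow> 0 < p n \<Longrightarrow> s * real n + 1 \<le> s * real m"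
  shows "ereal (- ln (p m)) \<le> Ip p (real m)"
proof (rule ereal_le_epsilon2)
  fix e :: real
  assume "0 < e"
  then have pos: "0 < p m * (exp e - 1)" using pm by simp
  define u where "u = max 0 (- ln (p m * (exp e - 1)))"
  have u: "0 \<le> u" "exp (- u) \<le> p m * (exp e - 1)"
    using pos by (auto simp: u_def ln_ge_iff[symmetric] simp del: exp_le_cancel_iff)
  let ?t = "u * s"
  note mgf = mgf_le_at_exposed_atom[OF p pm u(1) exposed]
  have "mgf p ?t \<le> exp (?t * real m) * (p m * exp e)"
    using u(2) by (intro order_trans[OF mgf(2)] mult_left_mono) (simp_all add: algebra_simps)
  then have "ln (mgf p ?t) \<le> ln (exp (?t * real m) * (p m * exp e))"
    using mgf_pos[OF p mgf(1)] by (subst ln_le_cancel_iff) auto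
  then have "ereal (- ln (p m) - e) \<le> ereal (?t * real m - ln (mgf p ?t))"
    using pm by (simp add: ln_mult)
  also have "\<dots> \<le> Ip p (real m)" by (rule bracket_le_Ip[OF mgf(1)])
  finally show "ereal (- ln (p m)) \<le> Ip p (real m) + ereal e"
    by (cases "Ip p (real m)") auto
qed

section \<open>Finitely supported approximation of the rate function\<close>

text \<open>Finitely supported competitors in the variational formula
  I_p(z) = inf {H(r || p) : r has mean z}.\<close>
definition rate_witness ::
    "(nat \<Rightarrow> real) \<Rightarrow> real \<Rightarrow> real \<Rightarrow> (nat \<Rightarrow> real) \<Rightarrow> nat \<Rightarrow> bool" where
  "rate_witness p z V r K \<longleftrightarrow>
     (\<forall>n. 0 \<le> r n) \<and> (\<forall>n>K. r n = 0) \<and> (\<Sum>n\<le>K. r n) = 1 \<and> (\<Sum>n\<le>K. real n * r n) = z \<and>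
     (\<forall>n. 0 < r n \<longrightarrow> 0 < p n) \<and> (\<Sum>n\<le>K. r n * ln (r n / p n)) \<le> V"

lemma rate_witness_mono: "rate_witness p z V r K \<Longrightarrow> V \<le> V' \<Longrightarrow> rate_witness p z V' r K"
  unfolding rate_witness_def by auto

lemma point_mass_rate_witness:
  assumes "0 < p m" "- ln (p m) \<le> V"
  shows "rate_witness p (real m) V (\<lambda>n. if n = m then 1 else 0) m"
proof -
  have "(\<Sum>n\<le>m. (if n = m then 1 else 0) * f n) = f m"
    and "(\<Sum>n\<le>m. f n * (if n = m then 1 else 0)) = f m" for f :: "nat \<Rightarrow> real"
    by (simp_all add: if_distrib[of "\<lambda>x. x * f _"] if_distrib[of "\<lambda>x. f _ * x"] cong: if_cong)
  then show ?thesis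
    using assms by (auto simp: rate_witness_def ln_div)
qed

abbreviation partial_mgf :: "(nat \<Rightarrow> real) \<Rightarrow> nat \<Rightarrow> real \<Rightarrow> real" where
  "partial_mgf p K t \<equiv> \<Sum>n\<le>K. p n * exp (t * real n)"

lemma partial_mgf_pos: "(\<And>n. 0 \<le> p n) \<Longrightarrow> 0 < p n0 \<Longrightarrow> n0 \<le> K \<Longrightarrow> 0 < partial_mgf p K t"
  by (rule sum_pos2[where i = n0]) (auto intro: mult_nonneg_nonneg)

text \<open>The mean of the tilted truncation of p, minus z, up to the normalising factor.\<close>
definition tilt_drift :: "(nat \<Rightarrow> real) \<Rightarrow> real \<Rightarrow> nat \<Rightarrow> real \<Rightarrow> real" where
  "tilt_drift p z K t = (\<Sum>n\<le>K. (real n - z) * (p n * exp (t * real n)))"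

lemma tilt_drift_nonpos:
  assumes p: "\<And>n. 0 \<le> p n" "(\<lambda>n. real n * p n) sums \<mu>"
    and n0: "n0 \<le> K" "real n0 < z"
    and t: "t \<le> 0" "exp (t * (z - real n0)) * \<mu> \<le> (z - real n0) * p n0"
  shows "tilt_drift p z K t \<le> 0"
proof -
  have z: "0 \<le> z" using n0(2) by linarith
  let ?atom = "(real n0 - z) * (p n0 * exp (t * real n0))"
  have atom_bound: "(real n - z) * (p n * exp (t * real n))
      \<le> (if n = n0 then ?atom else 0) + exp (t * z) * (real n * p n)" for n
  proof (cases "real n \<le> z")
    case True
    then have "(real n - z) * (p n * exp (t * real n)) \<le> 0"
      using p(1)[of n] by (simp add: mult_nonpos_nonneg)
    moreover have "0 \<le> exp (t * z) * (real n * p n)" using p(1)[of n] by simp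
    ultimately show ?thesis by auto
  next
    case False
    then have "exp (t * real n) \<le> exp (t * z)" using t(1) by (simp add: mult_left_mono_neg)
    then have "(real n - z) * (p n * exp (t * real n)) \<le> real n * (p n * exp (t * z))"
      using False p(1)[of n] z by (intro mult_mono mult_left_mono) auto
    then show ?thesis using False n0(2) by (auto simp: algebra_simps)
  qed
  have "tilt_drift p z K t \<le> ?atom + exp (t * z) * (\<Sum>n\<le>K. real n * p n)"
  proof -
    have "tilt_drift p z K t
        \<le> (\<Sum>n\<le>K. (if n = n0 then ?atom else 0) + exp (t * z) * (real n * p n))"
      unfolding tilt_drift_def by (intro sum_mono atom_bound)
    then show ?thesis using n0(1) by (simp add: sum.distrib sum_distrib_left)
  qed
  also have "\<dots> \<le> ?atom + exp (t * z) * \<mu>"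
  proof -
    have "(\<Sum>n\<le>K. real n * p n) \<le> \<mu>" using p by (auto simp: sums_iff intro!: sum_le_suminf)
    then show ?thesis by simp
  qed
  also have "exp (t * z) * \<mu> = exp (t * real n0) * (exp (t * (z - real n0)) * \<mu>)"
    by (simp add: exp_add[symmetric] algebra_simps)
  also have "\<dots> \<le> exp (t * real n0) * ((z - real n0) * p n0)"
    using t(2) by simp
  finally show ?thesis by (simp add: algebra_simps)
qed

lemma tilt_drift_nonneg:
  assumes p: "\<And>n. 0 \<le> p n" "p sums 1"
    and n1: "n1 \<le> K" "z < real n1" and z: "0 \<le> z"
    and t: "0 \<le> t" "z \<le> (real n1 - z) * p n1 * exp (t * (real n1 - z))"
  shows "0 \<le> tilt_drift p z K t"
proof -
  let ?atom = "(real n1 - z) * (p n1 * exp (t * real n1))"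
  have atom_bound: "(if n = n1 then ?atom else 0) - z * (p n * exp (t * z))
      \<le> (real n - z) * (p n * exp (t * real n))" for n
  proof (cases "z \<le> real n")
    case True
    then have "0 \<le> (real n - z) * (p n * exp (t * real n))" using p(1)[of n] by simp
    moreover have "0 \<le> z * (p n * exp (t * z))" using p(1)[of n] z by simp
    ultimately show ?thesis by auto
  next
    case False
    then have "p n * exp (t * real n) \<le> p n * exp (t * z)"
      using t(1) p(1)[of n] by (intro mult_left_mono) (auto intro: mult_left_mono)
    then have "- z * (p n * exp (t * z)) \<le> - z * (p n * exp (t * real n))"
      using z by (simp add: mult_left_mono)
    also have "\<dots> \<le> (real n - z) * (p n * exp (t * real n))"
      using p(1)[of n] by (intro mult_right_mono) auto
    finally show ?thesis using False n1(2) by auto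
  qed
  have "(\<Sum>n\<le>K. p n) \<le> 1"
    using p by (metis sums_iff sum_le_suminf finite_atMost)
  then have "?atom - z * exp (t * z) \<le> ?atom - z * exp (t * z) * (\<Sum>n\<le>K. p n)"
    using p(1) z by (simp add: mult_left_le sum_nonneg)
  also have "\<dots> \<le> tilt_drift p z K t"
  proof -
    have "(\<Sum>n\<le>K. (if n = n1 then ?atom else 0) - z * (p n * exp (t * z))) \<le> tilt_drift p z K t"
      unfolding tilt_drift_def by (intro sum_mono atom_bound)
    moreover have "(\<Sum>n\<le>K. z * (p n * exp (t * z))) = z * exp (t * z) * (\<Sum>n\<le>K. p n)"
      by (simp add: sum_distrib_left sum_distrib_right mult_ac)
    ultimately show ?thesis using n1(1) by (simp add: sum_subtractf)
  qed
  finally have "?atom - z * exp (t * z) \<le> tilt_drift p z K t" .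
  moreover have "z * exp (t * z) \<le> ?atom"
  proof -
    have "z * exp (t * z) \<le> (real n1 - z) * p n1 * exp (t * (real n1 - z)) * exp (t * z)"
      using t(2) by (intro mult_right_mono) auto
    also have "\<dots> = ?atom" by (simp add: exp_add[symmetric] algebra_simps)
    finally show ?thesis .
  qed
  ultimately show ?thesis by simp
qed

lemma tilted_truncation_rate_witness:
  assumes p: "\<And>n. 0 \<le> p n" and Z: "0 < partial_mgf p K t" and drift: "tilt_drift p z K t = 0"
  shows "rate_witness p z (t * z - ln (partial_mgf p K t))
           (\<lambda>n. if n \<le> K then p n * exp (t * real n) / partial_mgf p K t else 0) K"
proof -
  let ?Z = "partial_mgf p K t"
  let ?r = "\<lambda>n. if n \<le> K then p n * exp (t * real n) / ?Z else 0"
  have weighted: "(\<Sum>n\<le>K. g n * ?r n) = (\<Sum>n\<le>K. g n * (p n * exp (t * real n))) / ?Z" for g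
    by (simp add: sum_divide_distrib)
  have mass: "(\<Sum>n\<le>K. ?r n) = 1" using weighted[of "\<lambda>_. 1"] Z by simp
  have "(\<Sum>n\<le>K. real n * (p n * exp (t * real n))) = z * ?Z"
    using drift by (simp add: tilt_drift_def sum_subtractf sum_distrib_left left_diff_distrib)
  then have mean: "(\<Sum>n\<le>K. real n * ?r n) = z" using weighted[of real] Z by simp
  have "(\<Sum>n\<le>K. ?r n * ln (?r n / p n)) = (\<Sum>n\<le>K. (t * real n - ln ?Z) * ?r n)"
  proof (intro sum.cong refl)
    fix n
    assume "n \<in> {..K}"
    show "?r n * ln (?r n / p n) = (t * real n - ln ?Z) * ?r n"
    proof (cases "p n = 0")
      case False
      then have "?r n / p n = exp (t * real n) / ?Z" using \<open>n \<in> {..K}\<close> p[of n] by simp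
      then show ?thesis using Z by (simp add: ln_div)
    qed simp
  qed
  also have "\<dots> = t * (\<Sum>n\<le>K. real n * ?r n) - ln ?Z * (\<Sum>n\<le>K. ?r n)"
    by (simp add: left_diff_distrib sum_subtractf sum_distrib_left mult.assoc diff_divide_distrib)
  finally have "(\<Sum>n\<le>K. ?r n * ln (?r n / p n)) = t * z - ln ?Z" using mass mean by simp
  then show ?thesis
    using mass mean p Z by (auto simp: rate_witness_def zero_less_mult_iff order_less_le)
qed

lemma tilt_drift_roots_bounded:
  assumes p: "\<And>n. 0 \<le> p n" "p sums 1" "(\<lambda>n. real n * p n) sums \<mu>"
    and atoms: "real n0 < z" "z < real n1" "0 < p n0" "0 < p n1"
  obtains a b where "\<And>K. n0 + n1 \<le> K \<Longrightarrow> \<exists>t\<in>{a..b}. tilt_drift p z K t = 0"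
proof -
  have "0 < \<mu>"
    using atoms(1,2,4) p(1,3) sums_unique[OF p(3)]
    by (auto intro!: suminf_pos2[where i = n1] sums_summable[OF p(3)])
  define a where "a = min 0 (ln ((z - real n0) * p n0 / \<mu>) / (z - real n0))"
  define b where "b = max 0 (ln (z / ((real n1 - z) * p n1)) / (real n1 - z))"
  have a: "a \<le> 0" "exp (a * (z - real n0)) * \<mu> \<le> (z - real n0) * p n0"
  proof -
    have "a \<le> ln ((z - real n0) * p n0 / \<mu>) / (z - real n0)" by (simp add: a_def)
    then have "a * (z - real n0) \<le> ln ((z - real n0) * p n0 / \<mu>)"
      using atoms(1) by (simp add: pos_le_divide_eq)
    then show "exp (a * (z - real n0)) * \<mu> \<le> (z - real n0) * p n0"
      using atoms(1,3) \<open>0 < \<mu>\<close> by (simp add: ln_ge_iff pos_le_divide_eq)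
  qed (simp add: a_def)
  have b: "0 \<le> b" "z \<le> (real n1 - z) * p n1 * exp (b * (real n1 - z))"
  proof -
    have "ln (z / ((real n1 - z) * p n1)) / (real n1 - z) \<le> b" by (simp add: b_def)
    then have "ln (z / ((real n1 - z) * p n1)) \<le> b * (real n1 - z)"
      using atoms(2) by (simp add: pos_divide_le_eq)
    moreover have "0 < z / ((real n1 - z) * p n1)" using atoms(1,2,4) by simp
    ultimately have "z / ((real n1 - z) * p n1) \<le> exp (b * (real n1 - z))"
      by (metis exp_le_cancel_iff exp_ln)
    then show "z \<le> (real n1 - z) * p n1 * exp (b * (real n1 - z))"
      using atoms(2,4) by (simp add: pos_divide_le_eq mult_ac)
  qed (simp add: b_def)
  have "\<exists>t\<in>{a..b}. tilt_drift p z K t = 0" if "n0 + n1 \<le> K" for K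
  proof -
    have "continuous_on {a..b} (tilt_drift p z K)"
      unfolding tilt_drift_def by (intro continuous_intros)
    moreover have "tilt_drift p z K a \<le> 0"
      using that atoms(1) by (intro tilt_drift_nonpos[OF p(1,3) _ _ a]) auto
    moreover have "0 \<le> tilt_drift p z K b"
      using that atoms by (intro tilt_drift_nonneg[OF p(1,2) _ _ _ b]) auto
    ultimately show ?thesis using IVT'[of "tilt_drift p z K" a 0 b] a(1) b(1) by force
  qed
  then show ?thesis by (rule that)
qed

lemma Ip_ge_if_partial_brackets_ge:
  assumes p: "\<And>n. 0 \<le> p n" "p sums 1" "0 < p n0"
    and brackets: "\<And>K. n0 \<le> K \<Longrightarrow> c \<le> t * z - ln (partial_mgf p K t)"
  shows "ereal c \<le> Ip p z"
proof -
  have bounded: "partial_mgf p K t \<le> exp (t * z - c)" if "n0 \<le> K" for K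
    using brackets[OF that] partial_mgf_pos[of p, OF p(1,3) that]
    by (metis diff_ge_0_iff_ge exp_le_cancel_iff exp_ln le_diff_eq add.commute)
  have partial_sums: "(\<Sum>n<N. p n * exp (t * real n)) \<le> exp (t * z - c)" for N
  proof -
    have "(\<Sum>n<N. p n * exp (t * real n)) \<le> partial_mgf p (N + n0) t"
      using p(1) by (intro sum_mono2) auto
    then show ?thesis using bounded[of "N + n0"] by simp
  qed
  have summable: "mgf_summable p t"
    using p(1) by (intro summableI_nonneg_bounded[OF _ partial_sums]) simp
  have "mgf p t \<le> exp (t * z - c)" by (rule suminf_le_const[OF summable partial_sums])
  then have "ln (mgf p t) \<le> t * z - c"
    using mgf_pos[OF p(1,2) summable] by (metis exp_le_cancel_iff exp_ln)
  then have "ereal c \<le> ereal (t * z - ln (mgf p t))" by simp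
  also have "\<dots> \<le> Ip p z" by (rule bracket_le_Ip[OF summable])
  finally show ?thesis .
qed

text \<open>Compactness of the tilts: the brackets at a limit tilt inherit the lower bound.\<close>
lemma Ip_ge_if_truncated_brackets_ge:
  assumes p: "\<And>n. 0 \<le> p n" "p sums 1" "0 < p n0"
    and tilts: "\<And>j. tt j \<in> {a..b}" and lengths: "\<And>j. n0 + j \<le> k j"
    and brackets: "\<And>j. c \<le> tt j * z - ln (partial_mgf p (k j) (tt j))"
  shows "ereal c \<le> Ip p z"
proof -
  note partial_pos = partial_mgf_pos[of p, OF p(1,3)]
  have partial_mono: "partial_mgf p K t \<le> partial_mgf p K' t" if "K \<le> K'" for K K' t
    using that p(1) by (intro sum_mono2) auto
  obtain l \<sigma> where l: "l \<in> {a..b}" "strict_mono \<sigma>" "(\<lambda>j. tt (\<sigma> j)) \<longlonglongrightarrow> l"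
    using seq_compactE[OF compact_imp_seq_compact[OF compact_Icc], of tt a b] tilts
    by (auto simp: o_def)
  have limit_bracket: "c \<le> l * z - ln (partial_mgf p K l)" if "n0 \<le> K" for K
  proof (rule LIMSEQ_le_const)
    show "(\<lambda>j. tt (\<sigma> j) * z - ln (partial_mgf p K (tt (\<sigma> j)))) \<longlonglongrightarrow> l * z - ln (partial_mgf p K l)"
      using l(3) partial_pos[OF that, of l] by (intro tendsto_intros) auto
    show "\<exists>N. \<forall>j\<ge>N. c \<le> tt (\<sigma> j) * z - ln (partial_mgf p K (tt (\<sigma> j)))"
    proof (intro exI allI impI)
      fix j
      assume "K \<le> j"
      then have "K \<le> k (\<sigma> j)" using seq_suble[OF l(2), of j] lengths[of "\<sigma> j"] by linarith
      then have "ln (partial_mgf p K (tt (\<sigma> j))) \<le> ln (partial_mgf p (k (\<sigma> j)) (tt (\<sigma> j)))"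
        using partial_pos that by (subst ln_le_cancel_iff) (auto intro: partial_mono)
      then show "c \<le> tt (\<sigma> j) * z - ln (partial_mgf p K (tt (\<sigma> j)))"
        using brackets[of "\<sigma> j"] by linarith
    qed
  qed
  then show ?thesis by (rule Ip_ge_if_partial_brackets_ge[OF p])
qed

lemma exists_rate_witness_between_atoms:
  assumes p: "\<And>n. 0 \<le> p n" "p sums 1" "(\<lambda>n. real n * p n) sums \<mu>"
    and atoms: "real n0 < z" "z < real n1" "0 < p n0" "0 < p n1"
    and S: "Ip p z = ereal S" and "0 < e"
  shows "\<exists>r K. rate_witness p z (S + e) r K"
proof (rule ccontr)
  assume no_witness: "\<nexists>r K. rate_witness p z (S + e) r K"
  obtain a b where roots: "\<And>K. n0 + n1 \<le> K \<Longrightarrow> \<exists>t\<in>{a..b}. tilt_drift p z K t = 0"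
    using tilt_drift_roots_bounded[OF p atoms] by blast
  define k where "k j = n0 + n1 + j" for j
  have "\<forall>j. \<exists>t. t \<in> {a..b} \<and> tilt_drift p z (k j) t = 0"
    using roots[of "k _"] by (simp add: k_def Bex_def)
  then obtain tt where tt: "\<And>j. tt j \<in> {a..b}" "\<And>j. tilt_drift p z (k j) (tt j) = 0"
    by metis
  have pos: "0 < partial_mgf p (k j) t" for j t
    using partial_mgf_pos[of p, OF p(1) atoms(3)] by (simp add: k_def)
  have brackets: "S + e \<le> tt j * z - ln (partial_mgf p (k j) (tt j))" for j
  proof (rule ccontr)
    assume "\<not> ?thesis"
    then have "rate_witness p z (S + e)
        (\<lambda>n. if n \<le> k j then p n * exp (tt j * real n) / partial_mgf p (k j) (tt j) else 0) (k j)"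
      by (intro rate_witness_mono[OF tilted_truncation_rate_witness[OF p(1) pos tt(2)]]) simp
    with no_witness show False by blast
  qed
  have "n0 + j \<le> k j" for j by (simp add: k_def)
  from Ip_ge_if_truncated_brackets_ge[OF p(1,2) atoms(3) tt(1) this brackets]
  have "ereal (S + e) \<le> Ip p z" .
  with S \<open>0 < e\<close> show False by simp
qed

lemma exists_rate_witness_at_exposed_atom:
  assumes p: "\<And>n. 0 \<le> p n" "p sums 1" and S: "Ip p (real m) = ereal S" and "0 < e"
    and atom: "0 < p m" "\<And>n. n \<noteq> m \<Longrightarrow> 0 < p n \<Longrightarrow> s * real n + 1 \<le> s * real m"
  shows "\<exists>r K. rate_witness p (real m) (S + e) r K"
proof -
  have "- ln (p m) \<le> S + e"
    using neg_ln_le_Ip_at_exposed_atom[OF p atom] S \<open>0 < e\<close> by simp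
  then show ?thesis using point_mass_rate_witness[of p m] atom(1) by blast
qed

lemma exists_rate_witness_if_no_atom_below:
  assumes p: "\<And>n. 0 \<le> p n" "p sums 1" and S: "Ip p z = ereal S" and "0 < e"
    and none_below: "\<And>n. real n < z \<Longrightarrow> p n = 0"
  shows "\<exists>r K. rate_witness p z (S + e) r K"
proof -
  define m where "m = (LEAST n. 0 < p n)"
  have m: "0 < p m" "\<And>n. 0 < p n \<Longrightarrow> m \<le> n"
    using sums_one_imp_pos[OF p(2)] unfolding m_def by (auto intro: LeastI_ex Least_le)
  have "z = real m"
  proof (rule ccontr)
    assume "z \<noteq> real m"
    moreover have "\<not> real m < z" using none_below[of m] m(1) by auto
    ultimately have "- real m < -1 * z" by simp
    moreover have "-1 * real n \<le> - real m" if "0 < p n" for n using m(2)[OF that] by simp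
    ultimately show False using Ip_eq_infinity_if_separated[OF p] S by fastforce
  qed
  moreover have "-1 * real n + 1 \<le> -1 * real m" if "n \<noteq> m" "0 < p n" for n
    using m(2)[of n] that by simp
  ultimately show ?thesis using exists_rate_witness_at_exposed_atom[OF p _ \<open>0 < e\<close> m(1)] S by blast
qed

lemma exists_rate_witness_if_no_atom_above:
  assumes p: "\<And>n. 0 \<le> p n" "p sums 1" and S: "Ip p z = ereal S" and "0 < e"
    and none_above: "\<And>n. z < real n \<Longrightarrow> p n = 0"
  shows "\<exists>r K. rate_witness p z (S + e) r K"
proof -
  have "{n. 0 < p n} \<subseteq> {..nat \<lceil>z\<rceil>}"
  proof
    fix n
    assume "n \<in> {n. 0 < p n}"
    then have "real n \<le> z" using none_above[of n] by (cases "z < real n") auto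
    then show "n \<in> {..nat \<lceil>z\<rceil>}" by simp linarith
  qed
  then have finite: "finite {n. 0 < p n}" by (rule finite_subset) simp
  define M where "M = Max {n. 0 < p n}"
  have "{n. 0 < p n} \<noteq> {}" using sums_one_imp_pos[OF p(2)] by auto
  then have M: "0 < p M" "\<And>n. 0 < p n \<Longrightarrow> n \<le> M"
    using Max_in[OF finite] Max_ge[OF finite] unfolding M_def by auto
  have "z = real M"
  proof (rule ccontr)
    assume "z \<noteq> real M"
    moreover have "\<not> z < real M" using none_above[of M] M(1) by auto
    ultimately have "real M < 1 * z" by simp
    moreover have "1 * real n \<le> real M" if "0 < p n" for n using M(2)[OF that] by simp
    ultimately show False using Ip_eq_infinity_if_separated[OF p] S by fastforce
  qed
  moreover have "1 * real n + 1 \<le> 1 * real M" if "n \<noteq> M" "0 < p n" for n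
    using M(2)[of n] that by simp
  ultimately show ?thesis using exists_rate_witness_at_exposed_atom[OF p _ \<open>0 < e\<close> M(1)] S by blast
qed

lemma exists_rate_witness:
  assumes p: "\<And>n. 0 \<le> p n" "p sums 1" "(\<lambda>n. real n * p n) sums \<mu>"
    and S: "Ip p z = ereal S" and "0 < e"
  shows "\<exists>r K. rate_witness p z (S + e) r K"
proof -
  consider (between) n0 n1 where "real n0 < z" "z < real n1" "0 < p n0" "0 < p n1"
    | (none_below) "\<And>n. real n < z \<Longrightarrow> p n = 0"
    | (none_above) "\<And>n. z < real n \<Longrightarrow> p n = 0"
    using p(1) by (metis order_le_less)
  then show ?thesis
  proof cases
    case between
    then show ?thesis using exists_rate_witness_between_atoms[OF p _ _ _ _ S \<open>0 < e\<close>] by blast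
  next
    case none_below
    then show ?thesis using exists_rate_witness_if_no_atom_below[OF p(1,2) S \<open>0 < e\<close>] by blast
  next
    case none_above
    then show ?thesis using exists_rate_witness_if_no_atom_above[OF p(1,2) S \<open>0 < e\<close>] by blast
  qed
qed

section \<open>The constrained relative entropy minimisation\<close>

lemma relent_finiteE:
  assumes "relent \<nu> \<mu> \<noteq> \<infinity>"
  obtains R where "relent \<nu> \<mu> = ereal R" "\<And>x. 0 < \<nu> x \<Longrightarrow> 0 < \<mu> x"
    and "((\<lambda>x. \<nu> x * ln (\<nu> x / \<mu> x)) has_sum R) UNIV"
  using assms by (auto simp: relent_def split: if_splits)

locale word_count_constraint =
  fixes p :: "nat \<Rightarrow> real" and qh :: "'a::finite \<Rightarrow> real" and \<phi> :: "'a \<Rightarrow> real"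
  assumes p_nonneg: "\<And>n. 0 \<le> p n" and p_sums: "p sums 1"
    and p_mean: "summable (\<lambda>n. real n * p n)"
    and qh_nonneg: "\<And>b. 0 \<le> qh b" and qh_sum: "(\<Sum>b\<in>UNIV. qh b) = 1"
    and phi_nonneg: "\<And>b. 0 \<le> \<phi> b"
begin

abbreviation z :: real where "z \<equiv> \<Sum>b\<in>UNIV. \<phi> b"

definition feasible :: "('a list \<Rightarrow> real) \<Rightarrow> bool" where
  "feasible \<nu> \<longleftrightarrow> is_prob \<nu> \<and> (\<forall>b. ((\<lambda>c. real (mult b c) * \<nu> c) has_sum \<phi> b) UNIV)"

text \<open>For z = 0 only the empty word is feasible and any letter law would do; taking qh keeps
  freq a probability vector.\<close>
definition freq :: "'a \<Rightarrow> real" where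
  "freq b = (if z = 0 then qh b else \<phi> b / z)"

definition letter_cost :: real where
  "letter_cost = (\<Sum>b\<in>UNIV. \<phi> b * ln (freq b / qh b))"

lemma z_nonneg: "0 \<le> z"
  by (simp add: sum_nonneg phi_nonneg)

lemma phi_eq_0_if_z_eq_0: "z = 0 \<Longrightarrow> \<phi> b = 0"
  using sum_nonneg_eq_0_iff[of UNIV \<phi>] phi_nonneg by simp

lemma freq_nonneg: "0 \<le> freq b"
  using qh_nonneg phi_nonneg z_nonneg by (simp add: freq_def)

lemma sum_freq: "(\<Sum>b\<in>UNIV. freq b) = 1"
proof (cases "z = 0")
  case False
  have "(\<Sum>b\<in>UNIV. \<phi> b / z) = 1" using False by (simp add: sum_divide_distrib[symmetric])
  with False show ?thesis by (simp add: freq_def)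
qed (simp add: freq_def qh_sum)

lemma z_mult_freq: "z * freq b = \<phi> b"
  using phi_eq_0_if_z_eq_0 by (simp add: freq_def)

lemma freq_pos: "0 < \<phi> b \<Longrightarrow> 0 < freq b"
  using phi_eq_0_if_z_eq_0 z_nonneg by (force simp: freq_def)

lemma freq_pos_imp_qh_pos:
  "(\<And>b. 0 < \<phi> b \<Longrightarrow> 0 < qh b) \<Longrightarrow> 0 < freq b \<Longrightarrow> 0 < qh b"
  unfolding freq_def using z_nonneg by (auto simp: zero_less_divide_iff split: if_splits)

lemma letter_cost_eq: "letter_cost = z * (\<Sum>b\<in>UNIV. freq b * ln (freq b / qh b))"
  by (simp add: letter_cost_def sum_distrib_left z_mult_freq mult.assoc[symmetric])

lemma letter_term_eq:
  assumes "\<And>b. 0 < \<phi> b \<Longrightarrow> 0 < qh b"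
  shows "(if z = 0 then 0 else ereal z * relent (\<lambda>b. \<phi> b / z) qh) = ereal letter_cost"
proof (cases "z = 0")
  case True
  then show ?thesis unfolding letter_cost_def using phi_eq_0_if_z_eq_0[OF True] by simp
next
  case False
  then have "(\<lambda>b. \<phi> b / z) = freq" by (simp add: freq_def fun_eq_iff)
  moreover have "relent freq qh = ereal (\<Sum>b\<in>UNIV. freq b * ln (freq b / qh b))"
    using freq_pos_imp_qh_pos[OF assms] by (simp add: relent_def summable_on_finite infsum_finite)
  ultimately show ?thesis using False by (simp add: letter_cost_eq)
qed

lemma letter_term_eq_infinity:
  assumes "0 < \<phi> b" "\<not> 0 < qh b"
  shows "(if z = 0 then 0 else ereal z * relent (\<lambda>b. \<phi> b / z) qh) = \<infinity>"
proof -
  have "0 < z" using assms(1) z_nonneg phi_eq_0_if_z_eq_0 by force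
  moreover have "0 < \<phi> b / z" using calculation assms(1) by simp
  ultimately show ?thesis using assms(2) by (auto simp: relent_def)
qed

lemma rate_witness_word_law:
  assumes r: "rate_witness p z V r K" and ac: "\<And>b. 0 < \<phi> b \<Longrightarrow> 0 < qh b"
  shows "feasible (qword r freq)" and "relent (qword r freq) (qword p qh) \<le> ereal (V + letter_cost)"
proof -
  from r have r_nonneg: "\<And>n. 0 \<le> r n" and r_support: "\<And>n. K < n \<Longrightarrow> r n = 0"
    and mass: "(\<Sum>n\<le>K. r n) = 1" and mean: "(\<Sum>n\<le>K. real n * r n) = z"
    and abs_cont: "\<And>n. 0 < r n \<Longrightarrow> 0 < p n" and cost: "(\<Sum>n\<le>K. r n * ln (r n / p n)) \<le> V"
    unfolding rate_witness_def by auto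
  show "feasible (qword r freq)"
    using is_prob_qword[where K = K and r = r, OF r_nonneg r_support mass freq_nonneg sum_freq]
      has_sum_count_qword[where K = K and r = r, OF r_support sum_freq]
    by (simp add: feasible_def mean z_mult_freq)
  have "relent (qword r freq) (qword p qh) = ereal ((\<Sum>n\<le>K. r n * ln (r n / p n)) + letter_cost)"
    using relent_qword[where K = K and r = r, OF r_nonneg r_support abs_cont freq_nonneg sum_freq
                          freq_pos_imp_qh_pos[OF ac] p_nonneg qh_nonneg]
    by (simp add: mean letter_cost_eq)
  then show "relent (qword r freq) (qword p qh) \<le> ereal (V + letter_cost)" using cost by simp
qed

lemma Inf_relent_le:
  "Inf {relent \<nu> (qword p qh) | \<nu>. feasible \<nu>}
     \<le> (if z = 0 then 0 else ereal z * relent (\<lambda>b. \<phi> b / z) qh) + Ip p z"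
  (is "Inf ?A \<le> ?letters + _")
proof (cases "\<forall>b. 0 < \<phi> b \<longrightarrow> 0 < qh b")
  case False
  then have "?letters = \<infinity>" using letter_term_eq_infinity by blast
  then show ?thesis using Ip_nonneg[OF p_nonneg p_sums, of z] by simp
next
  case True
  then have letters: "?letters = ereal letter_cost" using letter_term_eq by blast
  show ?thesis
  proof (cases "Ip p z")
    case (real S)
    have "Inf ?A \<le> ereal (S + letter_cost)"
    proof (rule ereal_le_epsilon2)
      fix e :: real
      assume "0 < e"
      then obtain r K where r: "rate_witness p z (S + e) r K"
        using exists_rate_witness[OF p_nonneg p_sums summable_sums[OF p_mean] real] by blast
      then have "Inf ?A \<le> relent (qword r freq) (qword p qh)"
        using rate_witness_word_law(1)[OF r True[rule_format]] by (blast intro: Inf_lower)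
      also have "\<dots> \<le> ereal (S + e + letter_cost)"
        by (rule rate_witness_word_law(2)[OF r True[rule_format]])
      finally show "Inf ?A \<le> ereal (S + letter_cost) + ereal e" by (simp add: algebra_simps)
    qed
    then show ?thesis using letters real by (simp add: add.commute)
  qed (use Ip_nonneg[OF p_nonneg p_sums, of z] letters in simp_all)
qed

lemma feasible_nonneg: "feasible \<nu> \<Longrightarrow> 0 \<le> \<nu> c"
  by (simp add: feasible_def is_prob_def)

lemma feasible_letters_pos:
  assumes "feasible \<nu>" "0 < \<nu> c" "x \<in> set c"
  shows "0 < \<phi> x"
proof -
  have "count_list c x \<noteq> 0" using assms(3) by (simp add: count_list_0_iff)
  then have "0 < real (mult x c) * \<nu> c" using assms(2) by (simp add: mult_def)
  also have "\<dots> \<le> \<phi> x"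
    using assms(1) finite_sum_le_has_sum[where f = "\<lambda>c. real (mult x c) * \<nu> c" and B = "{c}"
                                           and A = UNIV and S = "\<phi> x"]
    by (simp add: feasible_def feasible_nonneg[OF assms(1)])
  finally show ?thesis .
qed

lemma feasible_abs_cont:
  assumes "feasible \<nu>" "relent \<nu> (qword p qh) \<noteq> \<infinity>" "0 < \<phi> b"
  shows "0 < qh b"
proof -
  have "\<exists>c. real (mult b c) * \<nu> c \<noteq> 0"
  proof (rule ccontr)
    assume "\<nexists>c. real (mult b c) * \<nu> c \<noteq> 0"
    then have "(\<lambda>c. real (mult b c) * \<nu> c) = (\<lambda>_. 0)" by auto
    then have "((\<lambda>c. real (mult b c) * \<nu> c) has_sum 0) UNIV" by simp
    with assms(1) have "\<phi> b = 0" by (auto simp: feasible_def dest: has_sum_unique)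
    with assms(3) show False by simp
  qed
  then obtain c where c: "real (mult b c) * \<nu> c \<noteq> 0" by blast
  then have "0 < \<nu> c" "b \<in> set c"
    using feasible_nonneg[OF assms(1), of c] by (auto simp: mult_def count_list_0_iff)
  moreover have "0 < qword p qh c"
    using relent_finiteE[OF assms(2)] calculation(1) by metis
  ultimately show ?thesis using qword_pos_iff[of p qh c] p_nonneg qh_nonneg by blast
qed

lemma feasible_mean_length:
  assumes "feasible \<nu>"
  shows "((\<lambda>c. real (length c) * \<nu> c) has_sum z) UNIV"
proof -
  have "real (length c) = (\<Sum>b\<in>UNIV. real (mult b c))" for c :: "'a list"
    using sum_list_map_eq_sum_count_list[of "\<lambda>_. 1::real" c] by (simp add: mult_def sum_list_triv)
  then show ?thesis
    using has_sum_sum[where I = UNIV and f = "\<lambda>b c. real (mult b c) * \<nu> c" and s = \<phi> and A = UNIV] assms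
    by (simp add: feasible_def sum_distrib_right)
qed

lemma tilted_word_law_pos:
  assumes "feasible \<nu>" "0 < \<nu> c" "0 < p (length c)"
  shows "0 < qword (\<lambda>n. p n * exp (t * real n)) freq c"
  using assms feasible_letters_pos freq_pos p_nonneg freq_nonneg by (simp add: qword_pos_iff)

lemma has_sum_log_tilted_ratio:
  assumes feasible: "feasible \<nu>" and q_pos: "\<And>c. 0 < \<nu> c \<Longrightarrow> 0 < qword p qh c"
  shows "((\<lambda>c. \<nu> c * ln (qword (\<lambda>n. p n * exp (t * real n)) freq c / qword p qh c))
           has_sum (t * z + letter_cost)) UNIV"
proof -
  let ?pt = "\<lambda>n. p n * exp (t * real n)"
  have log_ratio: "\<nu> c * ln (qword ?pt freq c / qword p qh c)
      = t * (real (length c) * \<nu> c)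
        + (\<Sum>b\<in>UNIV. ln (freq b / qh b) * (real (mult b c) * \<nu> c))" for c
  proof (cases "0 < \<nu> c")
    case True
    have p_pos: "0 < p (length c)"
      using q_pos[OF True] qword_pos_iff[of p qh c] p_nonneg qh_nonneg by blast
    have "ln (qword ?pt freq c / qword p qh c) = ln (?pt (length c) / p (length c))
          + (\<Sum>b\<in>UNIV. real (count_list c b) * ln (freq b / qh b))"
      using tilted_word_law_pos[OF feasible True p_pos] q_pos[OF True] p_nonneg
      by (intro ln_qword_divide freq_nonneg qh_nonneg) simp_all
    moreover have "ln (?pt (length c) / p (length c)) = t * real (length c)" using p_pos by simp
    ultimately show ?thesis by (simp add: mult_def distrib_left sum_distrib_left mult_ac)
  qed (use feasible_nonneg[OF feasible, of c] in simp)
  have "((\<lambda>c. t * (real (length c) * \<nu> c)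
           + (\<Sum>b\<in>UNIV. ln (freq b / qh b) * (real (mult b c) * \<nu> c)))
         has_sum (t * z + (\<Sum>b\<in>UNIV. ln (freq b / qh b) * \<phi> b))) UNIV"
    using feasible
    by (intro has_sum_add has_sum_cmult_right feasible_mean_length has_sum_sum)
       (auto simp: feasible_def intro: has_sum_cmult_right)
  then show ?thesis by (simp add: log_ratio letter_cost_def mult.commute)
qed

lemma bracket_le_relent_minus_letter_cost:
  assumes feasible: "feasible \<nu>" and R: "relent \<nu> (qword p qh) = ereal R"
    and summable: "mgf_summable p t"
  shows "t * z - ln (mgf p t) \<le> R - letter_cost"
proof -
  let ?pt = "\<lambda>n. p n * exp (t * real n)"
  have \<nu>: "\<And>c. 0 \<le> \<nu> c" "(\<nu> has_sum 1) UNIV"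
    using feasible by (auto simp: feasible_def is_prob_def)
  have "relent \<nu> (qword p qh) \<noteq> \<infinity>" using R by simp
  then obtain H where "relent \<nu> (qword p qh) = ereal H"
    and q_pos: "\<And>c. 0 < \<nu> c \<Longrightarrow> 0 < qword p qh c"
    and H: "((\<lambda>c. \<nu> c * ln (\<nu> c / qword p qh c)) has_sum H) UNIV"
    by (rule relent_finiteE) blast
  with R have H: "((\<lambda>c. \<nu> c * ln (\<nu> c / qword p qh c)) has_sum R) UNIV" by simp
  have w_pos: "0 < qword ?pt freq c" if "0 < \<nu> c" for c
    using q_pos[OF that] qword_pos_iff[of p qh c] p_nonneg qh_nonneg
    by (intro tilted_word_law_pos[OF feasible that]) blast
  obtain W where W: "(qword ?pt freq has_sum W) UNIV" "W \<le> mgf p t"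
    using has_sum_qword_le[of ?pt freq] p_nonneg summable freq_nonneg sum_freq by auto
  have "t * z + letter_cost - ln (mgf p t) \<le> R"
    using gibbs_inequality[OF \<nu> q_pos w_pos qword_nonneg W mgf_pos[OF p_nonneg p_sums summable]
                              H has_sum_log_tilted_ratio[OF feasible q_pos]] p_nonneg freq_nonneg
    by simp
  then show ?thesis by simp
qed

lemma relent_lower_bound:
  assumes "feasible \<nu>"
  shows "(if z = 0 then 0 else ereal z * relent (\<lambda>b. \<phi> b / z) qh) + Ip p z \<le> relent \<nu> (qword p qh)"
proof (cases "relent \<nu> (qword p qh)")
  case (real R)
  then have "Ip p z \<le> ereal (R - letter_cost)"
    using bracket_le_relent_minus_letter_cost[OF assms] by (intro Ip_le) auto
  moreover have "(if z = 0 then 0 else ereal z * relent (\<lambda>b. \<phi> b / z) qh) = ereal letter_cost"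
    using feasible_abs_cont[OF assms] real by (intro letter_term_eq) auto
  ultimately show ?thesis using real by (cases "Ip p z") auto
qed (auto simp: relent_def split: if_splits)

end

theorem lemma4p1:
  fixes qh :: "'a::finite \<Rightarrow> real" and p :: "nat \<Rightarrow> real" and \<phi> :: "'a \<Rightarrow> real"
  assumes qh_nonneg: "\<forall>b. qh b \<ge> 0" and qh_sum: "(\<Sum>b\<in>UNIV. qh b) = 1"
    and p_nonneg: "\<forall>n. p n \<ge> 0" and p_sum: "p sums 1"
    and p_mean: "(\<lambda>n. real n * p n) sums 1"
    and phi_nonneg: "\<forall>b. \<phi> b \<ge> 0"
  defines "z \<equiv> (\<Sum>b\<in>UNIV. \<phi> b)"
  shows "Inf {relent \<nu> (qword p qh) | \<nu>. is_prob \<nu> \<and>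
               (\<forall>b. ((\<lambda>c. real (mult b c) * \<nu> c) has_sum \<phi> b) UNIV)}
         = (if z = 0 then 0 else ereal z * relent (\<lambda>b. \<phi> b / z) qh) + Ip p z"
proof -
  interpret word_count_constraint p qh \<phi>
    using assms by unfold_locales (auto simp: sums_summable)
  show ?thesis
    unfolding z_def feasible_def[symmetric]
    using Inf_relent_le relent_lower_bound by (intro antisym Inf_greatest) auto
qed

end
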